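(* If $\partial$ is a tree-like $\mathrm{LM}_{\rightarrow}$ deduction of the sequent $\Rightarrow\rho$, then $\phi(\partial)\le(|\rho|+1)^2$.
   Context: Formulas of $\mathcal{L}_{\rightarrow}$ are built from propositional variables using only $\rightarrow$; $|\alpha|$ is the number of occurrences of $\rightarrow$ in $\alpha$. Sequents are $\Gamma\Rightarrow\alpha$ with $\Gamma$ a finite multiset. $\mathrm{LM}_{\rightarrow}$ has axioms $\Gamma,p\Rightarrow p$ ($p$ a variable) and rules: from $\Gamma,\alpha\Rightarrow\beta$ infer $\Gamma\Rightarrow\alpha\rightarrow\beta$ provided $\Gamma$ contains no $(\alpha\rightarrow\beta)\rightarrow\gamma$; from $\Gamma,\alpha,\beta\rightarrow\gamma\Rightarrow\beta$ infer $\Gamma,(\alpha\rightarrow\beta)\rightarrow\gamma\Rightarrow\alpha\rightarrow\beta$; from $\Gamma,p,\gamma\Rightarrow q$ infer $\Gamma,p,p\rightarrow\gamma\Rightarrow q$ ($p\neq q$ variables, $q$ occurring in $\Gamma$ or $\gamma$); from $\Gamma,\alpha,\beta\rightarrow\gamma\Rightarrow\beta$ and $\Gamma,\gamma\Rightarrow q$ infer $\Gamma,(\alpha\rightarrow\beta)\rightarrow\gamma\Rightarrow q$ ($q$ a variable occurring in $\Gamma$ or $\gamma$). $\phi(\partial)$ (the foundation) is the number of distinct formulas occurring in $\partial$. *)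

theory Defs
  imports Main "HOL-Library.Multiset"
begin

datatype form = Var nat | Imp form form

text \<open>\<open>|\<alpha>|\<close>: number of occurrences of \<open>\<rightarrow>\<close>.\<close>
fun imps :: "form \<Rightarrow> nat" where
  "imps (Var p) = 0"
| "imps (Imp a b) = Suc (imps a + imps b)"

fun vars :: "form \<Rightarrow> nat set" where
  "vars (Var p) = {p}"
| "vars (Imp a b) = vars a \<union> vars b"

type_synonym sequent = "form multiset \<times> form"

definition occurs_in :: "nat \<Rightarrow> form multiset \<Rightarrow> form \<Rightarrow> bool" where
  "occurs_in q G g \<longleftrightarrow> (\<exists>f\<in>#G. q \<in> vars f) \<or> q \<in> vars g"

inductive lm_rule :: "sequent list \<Rightarrow> sequent \<Rightarrow> bool" where
  ax: "lm_rule [] (G + {#Var p#}, Var p)"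
| impR: "(\<forall>g. Imp (Imp a b) g \<notin># G) \<Longrightarrow>
         lm_rule [(G + {#a#}, b)] (G, Imp a b)"
| impImpR: "lm_rule [(G + {#a, Imp b g#}, b)] (G + {#Imp (Imp a b) g#}, Imp a b)"
| impVarL: "p \<noteq> q \<Longrightarrow> occurs_in q (G + {#Var p#}) g \<Longrightarrow>
         lm_rule [(G + {#Var p, g#}, Var q)] (G + {#Var p, Imp (Var p) g#}, Var q)"
| impImpL: "occurs_in q G g \<Longrightarrow>
         lm_rule [(G + {#a, Imp b g#}, b), (G + {#g#}, Var q)]
                 (G + {#Imp (Imp a b) g#}, Var q)"

datatype dtree = Node sequent "dtree list"

fun root :: "dtree \<Rightarrow> sequent" where
  "root (Node s ts) = s"

fun lm_deduction :: "dtree \<Rightarrow> bool" where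
  "lm_deduction (Node s ts) \<longleftrightarrow> lm_rule (map root ts) s \<and> (\<forall>t\<in>set ts. lm_deduction t)"

fun seq_forms :: "sequent \<Rightarrow> form set" where
  "seq_forms (G, a) = set_mset G \<union> {a}"

fun forms :: "dtree \<Rightarrow> form set" where
  "forms (Node s ts) = seq_forms s \<union> (\<Union>t\<in>set ts. forms t)"

text \<open>The foundation \<open>\<phi>(\<partial>)\<close>: number of distinct formulas occurring in \<open>\<partial>\<close>.\<close>
definition foundation :: "dtree \<Rightarrow> nat" where
  "foundation d = card (forms d)"

end

theory Submission
  imports Defs
begin

text \<open>Every formula in an LM\<open>\<rightarrow>\<close> deduction of \<open>\<Rightarrow> \<rho>\<close> is either a subformula of \<open>\<rho>\<close>
  or of the form \<open>\<beta> \<rightarrow> \<gamma>\<close> where \<open>\<xi> \<rightarrow> \<gamma>\<close> is a subformula of \<open>\<rho>\<close> and \<open>\<beta>\<close> lies on the right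
  spine of \<open>\<xi>\<close>: read bottom-up, the rules only decompose formulas or replace
  \<open>(\<alpha> \<rightarrow> \<beta>) \<rightarrow> \<gamma>\<close> by \<open>\<beta> \<rightarrow> \<gamma>\<close>. There are at most \<open>2|\<rho>| + 1\<close> subformulas and at most
  \<open>|\<rho>|\<^sup>2\<close> formulas of the second kind, which gives \<open>(|\<rho>| + 1)\<^sup>2\<close>.\<close>

fun subforms :: "form \<Rightarrow> form set" where
  "subforms (Var p) = {Var p}"
| "subforms (Imp a b) = insert (Imp a b) (subforms a \<union> subforms b)"

fun right_spine :: "form \<Rightarrow> form set" where
  "right_spine (Var p) = {}"
| "right_spine (Imp a b) = insert b (right_spine b)"

text \<open>The formulas \<open>\<beta> \<rightarrow> \<gamma>\<close> with \<open>\<xi> \<rightarrow> \<gamma>\<close> a subformula and \<open>\<beta>\<close> on the right spine of \<open>\<xi>\<close>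
  (see \<open>mem_spine_shifts_iff\<close>); the recursion makes the counting easy.\<close>
fun spine_shifts :: "form \<Rightarrow> form set" where
  "spine_shifts (Var p) = {}"
| "spine_shifts (Imp a b) =
     (\<lambda>y. Imp y b) ` right_spine a \<union> spine_shifts a \<union> spine_shifts b"

definition lm_closure :: "form \<Rightarrow> form set" where
  "lm_closure r = subforms r \<union> spine_shifts r"

definition lm_closed :: "form set \<Rightarrow> bool" where
  "lm_closed S \<longleftrightarrow>
     (\<forall>a b. Imp a b \<in> S \<longrightarrow> a \<in> S \<and> b \<in> S) \<and>
     (\<forall>a b g. Imp (Imp a b) g \<in> S \<longrightarrow> Imp b g \<in> S)"

lemma subforms_self [simp]: "x \<in> subforms x"
  by (cases x) auto

lemma subforms_trans: "x \<in> subforms y \<Longrightarrow> subforms x \<subseteq> subforms y"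
  by (induction y) auto

lemma right_spine_subset_subforms: "right_spine x \<subseteq> subforms x"
  by (induction x) auto

lemma right_spine_trans: "y \<in> right_spine x \<Longrightarrow> right_spine y \<subseteq> right_spine x"
  by (induction x) auto

lemma mem_spine_shifts_iff:
  "z \<in> spine_shifts r \<longleftrightarrow> (\<exists>x g y. z = Imp y g \<and> Imp x g \<in> subforms r \<and> y \<in> right_spine x)"
  by (induction r) auto

lemma finite_subforms [simp]: "finite (subforms x)"
  by (induction x) auto

lemma finite_right_spine [simp]: "finite (right_spine x)"
  by (induction x) auto

lemma finite_spine_shifts [simp]: "finite (spine_shifts x)"
  by (induction x) auto

lemma card_subforms_le: "card (subforms x) \<le> 2 * imps x + 1"
proof (induction x)
  case (Imp a b)
  have "card (subforms (Imp a b)) \<le> Suc (card (subforms a \<union> subforms b))"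
    by (simp add: card_insert_if)
  also have "\<dots> \<le> Suc (card (subforms a) + card (subforms b))"
    using card_Un_le by simp
  finally show ?case using Imp.IH by simp
qed simp

lemma card_right_spine_le: "card (right_spine x) \<le> imps x"
proof (induction x)
  case (Imp a b)
  have "card (right_spine (Imp a b)) \<le> Suc (card (right_spine b))"
    by (simp add: card_insert_if)
  then show ?case using Imp.IH by simp
qed simp

lemma card_spine_shifts_le: "card (spine_shifts x) \<le> imps x ^ 2"
proof (induction x)
  case (Imp a b)
  have "card (spine_shifts (Imp a b))
          \<le> card ((\<lambda>y. Imp y b) ` right_spine a) + card (spine_shifts a) + card (spine_shifts b)"
    by (simp, meson card_Un_le le_trans add_le_mono order_refl)
  also have "\<dots> \<le> imps a + imps a ^ 2 + imps b ^ 2"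
    using Imp.IH card_right_spine_le[of a] card_image_le[of "right_spine a" "\<lambda>y. Imp y b"]
    by simp
  also have "\<dots> \<le> imps (Imp a b) ^ 2"
    by (simp add: power2_eq_square algebra_simps)
  finally show ?case .
qed simp

lemma card_lm_closure_le: "card (lm_closure r) \<le> (imps r + 1) ^ 2"
proof -
  have "card (lm_closure r) \<le> card (subforms r) + card (spine_shifts r)"
    unfolding lm_closure_def by (rule card_Un_le)
  also have "\<dots> \<le> (imps r + 1) ^ 2"
    using card_subforms_le[of r] card_spine_shifts_le[of r]
    by (simp add: power2_eq_square algebra_simps)
  finally show ?thesis .
qed

lemma lm_closed_lm_closure: "lm_closed (lm_closure r)"
  unfolding lm_closed_def
proof (intro conjI allI impI)
  fix a b
  assume "Imp a b \<in> lm_closure r"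
  then obtain x where "Imp x b \<in> subforms r" and "a \<in> subforms x"
    unfolding lm_closure_def Un_iff mem_spine_shifts_iff
    using subforms_self right_spine_subset_subforms by blast
  then have "a \<in> subforms r \<and> b \<in> subforms r"
    using subforms_trans by fastforce
  then show "a \<in> lm_closure r" "b \<in> lm_closure r"
    by (simp_all add: lm_closure_def)
next
  fix a b g
  assume "Imp (Imp a b) g \<in> lm_closure r"
  then obtain x where "Imp x g \<in> subforms r" and "b \<in> right_spine x"
    unfolding lm_closure_def Un_iff mem_spine_shifts_iff
    using right_spine.simps(2) right_spine_trans by blast
  then show "Imp b g \<in> lm_closure r"
    unfolding lm_closure_def Un_iff mem_spine_shifts_iff by blast
qed

lemma lm_closedD:
  assumes "lm_closed S"
  shows "Imp a b \<in> S \<Longrightarrow> a \<in> S"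
    and "Imp a b \<in> S \<Longrightarrow> b \<in> S"
    and "Imp (Imp a b) g \<in> S \<Longrightarrow> Imp b g \<in> S"
  using assms unfolding lm_closed_def by blast+

lemma lm_rule_premise_forms_closed:
  assumes "lm_rule ps s" and "lm_closed S" and "seq_forms s \<subseteq> S" and "p \<in> set ps"
  shows "seq_forms p \<subseteq> S"
  using assms
proof (induction rule: lm_rule.induct)
  case (impR a b G)
  then show ?case using lm_closedD(1,2)[of S a b] by auto
next
  case (impImpR G a b g)
  then show ?case using lm_closedD(1,2)[of S a b] lm_closedD(3)[of S a b g] by auto
next
  case (impVarL p q G g)
  then show ?case using lm_closedD(2)[of S "Var p" g] by auto
next
  case (impImpL q G g a b)
  then have "Imp a b \<in> S" "g \<in> S" using lm_closedD(1,2)[of S "Imp a b" g] by auto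
  with impImpL show ?case
    using lm_closedD(1,2)[of S a b] lm_closedD(3)[of S a b g] by auto
qed simp

lemma forms_subset_lm_closed:
  "lm_deduction d \<Longrightarrow> lm_closed S \<Longrightarrow> seq_forms (root d) \<subseteq> S \<Longrightarrow> forms d \<subseteq> S"
proof (induction d rule: lm_deduction.induct)
  case (1 s ts)
  have "forms t \<subseteq> S" if "t \<in> set ts" for t
    using 1 lm_rule_premise_forms_closed[of "map root ts" s S "root t"] that by auto
  then show ?case using 1 by auto
qed

theorem lemma2:
  assumes "lm_deduction d" and "root d = ({#}, \<rho>)"
  shows "foundation d \<le> (imps \<rho> + 1) ^ 2"
proof -
  have "forms d \<subseteq> lm_closure \<rho>"
    using forms_subset_lm_closed[OF assms(1) lm_closed_lm_closure] assms(2)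
    by (simp add: lm_closure_def)
  then have "card (forms d) \<le> card (lm_closure \<rho>)"
    by (simp add: card_mono lm_closure_def)
  then show ?thesis
    using card_lm_closure_le[of \<rho>] by (simp add: foundation_def)
qed

end
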